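(* Let $r\ge 3$ and let $k_0,k_1,\dots,k_{r-1}$ be integers with $3\le k_0\le k_1\le \cdots \le k_{r-1}$. Then for every integer $m$ with $2\le m\le r-1$, \[ S(r;k_0,\dots,k_{r-1}) \ge \Bigl(\prod_{j=m}^{r-1}k_j\Bigr)\,S(m;k_0,\dots,k_{m-1}) -\sum_{i=m}^{r-1}\prod_{j=i+1}^{r-1}k_j, \] where an empty product is interpreted as $1$.
   Context: For an integer $k\ge 3$, let $\mathcal{L}(k)$ denote the equation $x_1+x_2+\cdots+x_{k-1}=x_k$ in positive integer variables (the $x_i$ need not be distinct). For $N\ge1$, write $[1,N]=\{1,2,\dots,N\}$. For integers $r\ge1$ and $k_0,\dots,k_{r-1}\ge 3$, the generalized Schur number $S(r;k_0,\dots,k_{r-1})$ is the least positive integer $N$ such that for every coloring $\Delta:[1,N]\to\{0,1,\dots,r-1\}$ there exist some $i\in\{0,\dots,r-1\}$ and positive integers $x_1,\dots,x_{k_i}\in[1,N]$ satisfying $\mathcal{L}(k_i)$ with $\Delta(x_1)=\cdots=\Delta(x_{k_i})=i$. *)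

theory Defs
  imports Main
begin

text \<open>A coloring \<Delta> of [1,N] with colors {0,...,r-1} has a monochromatic solution of
  L(k_i) in color i for some i < r: positive integers x_1,...,x_{k_i} in [1,N]
  (here indexed x 0, ..., x (k_i - 1)) with x_1 + ... + x_{k_i - 1} = x_{k_i},
  all of color i.\<close>
definition has_mono_solution :: "nat \<Rightarrow> (nat \<Rightarrow> nat) \<Rightarrow> nat \<Rightarrow> (nat \<Rightarrow> nat) \<Rightarrow> bool" where
  "has_mono_solution r k N \<Delta> \<longleftrightarrow>
     (\<exists>i < r. \<exists>x :: nat \<Rightarrow> nat.
        (\<forall>j < k i. x j \<in> {1..N} \<and> \<Delta> (x j) = i) \<and>
        (\<Sum>j < k i - 1. x j) = x (k i - 1))"

definition gen_schur :: "nat \<Rightarrow> (nat \<Rightarrow> nat) \<Rightarrow> nat" where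
  "gen_schur r k = (LEAST N. N \<ge> 1 \<and>
     (\<forall>\<Delta> :: nat \<Rightarrow> nat. (\<forall>n \<in> {1..N}. \<Delta> n < r) \<longrightarrow> has_mono_solution r k N \<Delta>))"

end

theory Submission
  imports Defs "HOL-Library.Ramsey"
begin

text \<open>
  The bound comes from iterating a one-colour extension. Let \<Delta> be a colouring of [1,s] with
  colours 0..t-1 without monochromatic solutions, and put B = (k_t - 1) s + k_t - 2.
  Colour (s, B] with the new colour t, and [1,s] and (B, B+s] by \<Delta> of the residue modulo B.
  A solution in colour t would have k_t - 1 summands above s, whose sum exceeds B. For an old
  colour i the residues of the summands are at most s and add up to at most
  (k_i - 1) s < B, so reducing a solution modulo B gives a solution for \<Delta>. Hence
  S(t+1) > B + s, i.e. S(t+1) \<ge> k_t S(t) - 1, and unrolling this recursion from m to r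
  gives the theorem. Existence of S(t) is Ramsey's theorem applied to the colouring
  {a,b} \<mapsto> \<Delta>(|b - a|).
\<close>

definition solution_free :: "nat \<Rightarrow> (nat \<Rightarrow> nat) \<Rightarrow> nat \<Rightarrow> (nat \<Rightarrow> nat) \<Rightarrow> bool" where
  "solution_free r k N \<Delta> \<longleftrightarrow> (\<forall>n \<in> {1..N}. \<Delta> n < r) \<and> \<not> has_mono_solution r k N \<Delta>"

lemma sum_lessThan_telescope_nat:
  fixes a :: "nat \<Rightarrow> nat"
  assumes "\<And>j. j < n \<Longrightarrow> a j \<le> a (Suc j)"
  shows "(\<Sum>j<n. a (Suc j) - a j) = a n - a 0"
proof -
  have "int (\<Sum>j<n. a (Suc j) - a j) = (\<Sum>j<n. int (a (Suc j)) - int (a j))"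
    using assms by (simp add: of_nat_diff)
  also have "\<dots> = int (a n) - int (a 0)"
    by (rule sum_lessThan_telescope)
  finally show ?thesis by linarith
qed

lemma mono_solution_of_differences:
  fixes a :: "nat \<Rightarrow> nat"
  assumes "2 \<le> k i" and "i < r"
    and diff: "\<And>p q. p < q \<Longrightarrow> q < k i \<Longrightarrow> a p < a q \<and> a q - a p \<le> N \<and> \<Delta> (a q - a p) = i"
  shows "has_mono_solution r k N \<Delta>"
proof -
  define n where "n = k i"
  define x where "x j = (if j < n - 1 then a (Suc j) - a j else a (n - 1) - a 0)" for j
  have "x j \<in> {1..N} \<and> \<Delta> (x j) = i" if "j < n" for j
  proof (cases "j < n - 1")
    case True
    then show ?thesis using diff[of j "Suc j"] by (auto simp: x_def n_def less_diff_conv)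
  next
    case False
    then show ?thesis using diff[of 0 "n - 1"] that assms(1) by (auto simp: x_def n_def)
  qed
  moreover have "(\<Sum>j < n - 1. x j) = x (n - 1)"
    using diff by (simp add: x_def sum_lessThan_telescope_nat less_imp_le n_def)
  ultimately show ?thesis
    unfolding has_mono_solution_def n_def using \<open>i < r\<close> by blast
qed

lemma ex_no_solution_free_coloring:
  assumes "\<And>i. i < r \<Longrightarrow> 2 \<le> k i"
  obtains N where "1 \<le> N" and "\<And>\<Delta>. \<not> solution_free r k N \<Delta>"
proof -
  obtain N :: nat where N: "partn_lst {..<N} (map k [0..<r]) 2"
    using ramsey_full by blast
  have "has_mono_solution r k (N + 1) \<Delta>" if col: "\<forall>n \<in> {1..N+1}. \<Delta> n < r" for \<Delta>
  proof -
    define f where "f H = \<Delta> (Max H - Min H)" for H :: "nat set"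
    have f_pair: "f {p, q} = \<Delta> (q - p)" if "p < q" for p q
      using that by (simp add: f_def max_def min_def)
    have "f \<in> nsets {..<N} 2 \<rightarrow> {..<r}"
    proof
      fix H assume "H \<in> nsets {..<N} 2"
      then obtain p q where "H = {p, q}" "p < q" "q < N"
        by (auto simp: nsets_def card_2_iff) (metis insert_commute linorder_neqE_nat)
      moreover have "q - p \<in> {1..N+1}"
        using \<open>p < q\<close> \<open>q < N\<close> by auto
      ultimately show "f H \<in> {..<r}"
        using col f_pair by auto
    qed
    then obtain i H where "i < r" and H: "H \<in> nsets {..<N} (k i)" and H_mono: "f ` nsets H 2 \<subseteq> {i}"
      using partn_lstE[OF N] by (metis length_map length_upt minus_nat.diff_0 nth_map_upt add_0)
    define a where "a = (!) (sorted_list_of_set H)"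
    have "a p < a q \<and> a q - a p \<le> N + 1 \<and> \<Delta> (a q - a p) = i" if "p < q" "q < k i" for p q
    proof -
      have len: "length (sorted_list_of_set H) = k i" and "finite H" and "H \<subseteq> {..<N}"
        using H by (auto simp: nsets_def)
      then have "a p \<in> H" "a q \<in> H"
        using that by (metis a_def nth_mem set_sorted_list_of_set order.strict_trans)+
      moreover have "a p < a q"
        using that len by (simp add: a_def sorted_wrt_nth_less[OF strict_sorted_list_of_set])
      ultimately show ?thesis
        using H_mono f_pair \<open>H \<subseteq> {..<N}\<close> by (fastforce simp: image_subset_iff)
    qed
    then show ?thesis
      using mono_solution_of_differences assms \<open>i < r\<close> by blast
  qed
  then show ?thesis
    by (intro that[of "N + 1"]) (auto simp: solution_free_def)
qed

lemma solution_free_mono: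
  assumes "solution_free r k M \<Delta>" and "N \<le> M"
  shows "solution_free r k N \<Delta>"
  using assms unfolding solution_free_def has_mono_solution_def
  by (meson atLeastAtMost_iff order_trans)

lemma gen_schur_eq_Least:
  "gen_schur r k = (LEAST N. 1 \<le> N \<and> (\<forall>\<Delta>. \<not> solution_free r k N \<Delta>))"
  unfolding gen_schur_def solution_free_def by (auto intro!: arg_cong[where f = Least])

lemma solution_free_less_gen_schur:
  assumes "\<And>i. i < r \<Longrightarrow> 2 \<le> k i" and "solution_free r k N \<Delta>"
  shows "N < gen_schur r k"
proof (rule ccontr)
  obtain N' where "1 \<le> N' \<and> (\<forall>\<Delta>. \<not> solution_free r k N' \<Delta>)"
    using ex_no_solution_free_coloring assms(1) by metis
  then have "\<forall>\<Delta>. \<not> solution_free r k (gen_schur r k) \<Delta>"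
    unfolding gen_schur_eq_Least by (rule LeastI2_ex[OF exI]) simp
  moreover assume "\<not> N < gen_schur r k"
  with assms(2) have "solution_free r k (gen_schur r k) \<Delta>"
    by (simp add: solution_free_mono)
  ultimately show False by blast
qed

lemma ex_solution_free_gen_schur_minus_1:
  assumes "\<And>i. i < r \<Longrightarrow> 1 \<le> k i"
  shows "\<exists>\<Delta>. solution_free r k (gen_schur r k - 1) \<Delta>"
proof (cases "gen_schur r k - 1 = 0")
  case True
  have "\<not> has_mono_solution r k 0 \<Delta>" for \<Delta>
    using assms by (fastforce simp: has_mono_solution_def)
  then show ?thesis
    using True by (simp add: solution_free_def)
next
  case False
  then have "gen_schur r k - 1 < gen_schur r k"
    by simp
  then show ?thesis
    using not_less_Least False unfolding gen_schur_eq_Least by fastforce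
qed

lemma sum_mod_eq_mod_if_less:
  fixes f :: "'a \<Rightarrow> nat"
  assumes "sum f A = b" and "(\<Sum>i\<in>A. f i mod B) < B"
  shows "(\<Sum>i\<in>A. f i mod B) = b mod B"
proof -
  have "(\<Sum>i\<in>A. f i mod B) = (\<Sum>i\<in>A. f i mod B) mod B"
    using assms(2) by simp
  also have "\<dots> = b mod B"
    using assms(1) by (simp add: mod_sum_eq)
  finally show ?thesis .
qed

lemma has_mono_solution_mod:
  assumes "i < r" and x: "\<And>j. j < k i \<Longrightarrow> x j mod B \<in> {1..s} \<and> \<Delta> (x j mod B) = i"
    and x_sum: "(\<Sum>j < k i - 1. x j) = x (k i - 1)" and "(k i - 1) * s < B"
  shows "has_mono_solution r k s \<Delta>"
proof -
  have "(\<Sum>j < k i - 1. x j mod B) \<le> (\<Sum>j < k i - 1. s)"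
    using x by (intro sum_mono) simp
  also have "\<dots> < B"
    using assms(4) by simp
  finally have "(\<Sum>j < k i - 1. x j mod B) = x (k i - 1) mod B"
    using sum_mod_eq_mod_if_less[OF x_sum] by simp
  with x show ?thesis
    unfolding has_mono_solution_def
    by (intro exI[of _ i] conjI[OF \<open>i < r\<close>] exI[of _ "\<lambda>j. x j mod B"]) auto
qed

lemma mod_mem_outside_block:
  fixes n s B :: nat
  assumes "s < B" and "n \<in> {1..B+s}" and "\<not> (s < n \<and> n \<le> B)"
  shows "n mod B \<in> {1..s}"
proof (cases "n \<le> s")
  case True
  then show ?thesis using assms by simp
next
  case False
  then have "n mod B = n - B"
    using assms by (simp add: mod_if le_mod_geq)
  then show ?thesis using assms False by auto
qed

lemma solution_free_extend:
  assumes free: "solution_free t k s \<Delta>"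
    and "3 \<le> k t" and le_kt: "\<And>i. i < t \<Longrightarrow> k i \<le> k t"
  defines "B \<equiv> (k t - 1) * s + k t - 2"
  shows "solution_free (Suc t) k (B + s) (\<lambda>n. if s < n \<and> n \<le> B then t else \<Delta> (n mod B))"
    (is "solution_free _ _ _ ?\<Delta>")
proof -
  have B_eq: "B + 1 = (k t - 1) * (s + 1)"
    unfolding B_def distrib_left using \<open>3 \<le> k t\<close> by linarith
  have sB: "(k t - 1) * s < B"
    using \<open>3 \<le> k t\<close> by (simp add: B_def)
  moreover have "1 * s \<le> (k t - 1) * s"
    using \<open>3 \<le> k t\<close> by (intro mult_le_mono1) simp
  ultimately have "s < B" by linarith
  have \<Delta>_col: "\<Delta> n < t" if "n \<in> {1..s}" for n
    using free that by (simp add: solution_free_def)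
  have outer: "n mod B \<in> {1..s} \<and> ?\<Delta> n = \<Delta> (n mod B)"
    if "n \<in> {1..B+s}" "\<not> (s < n \<and> n \<le> B)" for n
    using mod_mem_outside_block[OF \<open>s < B\<close> that] that by auto
  have coloring: "\<forall>n \<in> {1..B+s}. ?\<Delta> n < Suc t"
    using outer \<Delta>_col by (metis less_Suc_eq)
  have "\<not> has_mono_solution (Suc t) k (B + s) ?\<Delta>"
  proof
    assume "has_mono_solution (Suc t) k (B + s) ?\<Delta>"
    then obtain i x where "i < Suc t"
      and x: "\<And>j. j < k i \<Longrightarrow> x j \<in> {1..B+s} \<and> ?\<Delta> (x j) = i"
      and x_sum: "(\<Sum>j < k i - 1. x j) = x (k i - 1)"
      unfolding has_mono_solution_def by blast
    show False
    proof (cases "i = t")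
      case True
      have middle: "s < x j \<and> x j \<le> B" if "j < k t" for j
        using x[of j] outer[of "x j"] \<Delta>_col[of "x j mod B"] that True by fastforce
      have "(k t - 1) * (s + 1) = (\<Sum>j < k t - 1. s + 1)"
        by simp
      also have "\<dots> \<le> (\<Sum>j < k t - 1. x j)"
        using middle by (intro sum_mono) (simp add: Suc_le_eq)
      moreover have "x (k t - 1) \<le> B"
        using middle \<open>3 \<le> k t\<close> by simp
      ultimately show False
        using x_sum True B_eq by simp
    next
      case False
      with \<open>i < Suc t\<close> have "i < t" by simp
      have "(k i - 1) * s \<le> (k t - 1) * s"
        using le_kt[OF \<open>i < t\<close>] by (intro mult_le_mono1) simp
      with sB have "(k i - 1) * s < B"
        by linarith
      moreover have "x j mod B \<in> {1..s} \<and> \<Delta> (x j mod B) = i" if "j < k i" for j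
      proof -
        have xj: "x j \<in> {1..B+s}" "?\<Delta> (x j) = i"
          using x[OF that] by blast+
        have "\<not> (s < x j \<and> x j \<le> B)"
        proof
          assume "s < x j \<and> x j \<le> B"
          then have "?\<Delta> (x j) = t"
            by simp
          with xj(2) \<open>i < t\<close> show False
            by simp
        qed
        from outer[OF xj(1) this] xj(2) show ?thesis
          by argo
      qed
      ultimately have "has_mono_solution t k s \<Delta>"
        using has_mono_solution_mod[where r = t and \<Delta> = \<Delta>] \<open>i < t\<close> x_sum by blast
      then show False
        using free by (simp add: solution_free_def)
    qed
  qed
  then show ?thesis
    using coloring by (simp add: solution_free_def)
qed

lemma gen_schur_Suc_lower_bound:
  assumes "3 \<le> k t" and k2: "\<And>i. i < t \<Longrightarrow> 2 \<le> k i" and le_kt: "\<And>i. i < t \<Longrightarrow> k i \<le> k t"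
  shows "int (k t) * int (gen_schur t k) - 1 \<le> int (gen_schur (Suc t) k)"
proof -
  define s where "s = gen_schur t k - 1"
  obtain \<Delta> where free: "solution_free t k s \<Delta>"
    using ex_solution_free_gen_schur_minus_1[of t k] k2 unfolding s_def by force
  have k2_Suc: "\<And>i. i < Suc t \<Longrightarrow> 2 \<le> k i"
    using k2 \<open>3 \<le> k t\<close> by (auto simp: less_Suc_eq)
  have "(k t - 1) * s + k t - 2 + s < gen_schur (Suc t) k"
    using solution_free_less_gen_schur[OF k2_Suc solution_free_extend[OF free \<open>3 \<le> k t\<close> le_kt]] .
  moreover obtain c where "k t = c + 3"
    using \<open>3 \<le> k t\<close> le_Suc_ex by (metis add.commute)
  then have "int ((k t - 1) * s + k t - 2 + s) + 1 = int (k t) * int (s + 1) - 1"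
    by (simp add: algebra_simps)
  moreover have "int (k t) * int (gen_schur t k) \<le> int (k t) * int (s + 1)"
    by (intro mult_left_mono) (auto simp: s_def)
  ultimately show ?thesis
    by linarith
qed

lemma iterated_affine_lower_bound:
  fixes a c :: "nat \<Rightarrow> int"
  assumes "m \<le> n"
    and recurrence: "\<And>t. m \<le> t \<Longrightarrow> t < n \<Longrightarrow> c t * a t - 1 \<le> a (Suc t)"
    and nonneg: "\<And>t. m \<le> t \<Longrightarrow> t < n \<Longrightarrow> 0 \<le> c t"
  shows "(\<Prod>j = m..<n. c j) * a m - (\<Sum>i = m..<n. \<Prod>j = i+1..<n. c j) \<le> a n"
  using assms(1) recurrence nonneg
proof (induction n rule: dec_induct)
  case base
  then show ?case by simp
next
  case (step t)
  let ?P = "\<Prod>j = m..<t. c j" and ?S = "\<Sum>i = m..<t. \<Prod>j = i+1..<t. c j"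
  have "c t * (?P * a m - ?S) \<le> c t * a t"
    using step by (intro mult_left_mono) auto
  moreover have "c t * a t - 1 \<le> a (Suc t)"
    using step by simp
  moreover have "(\<Prod>j = m..<Suc t. c j) = ?P * c t"
    using step by (simp add: prod.atLeastLessThan_Suc)
  moreover have "(\<Sum>i = m..<Suc t. \<Prod>j = i+1..<Suc t. c j) = ?S * c t + 1"
    using step by (simp add: sum.atLeastLessThan_Suc prod.atLeastLessThan_Suc sum_distrib_right)
  ultimately show ?case
    by (simp add: algebra_simps)
qed

theorem theorem4:
  fixes r m :: nat and k :: "nat \<Rightarrow> nat"
  assumes "r \<ge> 3"
    and "\<And>i. i < r \<Longrightarrow> k i \<ge> 3"
    and "\<And>i j. i \<le> j \<Longrightarrow> j < r \<Longrightarrow> k i \<le> k j"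
    and "2 \<le> m" and "m \<le> r - 1"
  shows "int (gen_schur r k) \<ge>
           (\<Prod>j = m..r-1. int (k j)) * int (gen_schur m k)
           - (\<Sum>i = m..r-1. \<Prod>j = i+1..r-1. int (k j))"
proof -
  have intervals: "\<And>a. {a..r-1} = {a..<r}"
    using assms(4,5) by auto
  have "(\<Prod>j = m..<r. int (k j)) * int (gen_schur m k)
          - (\<Sum>i = m..<r. \<Prod>j = i+1..<r. int (k j)) \<le> int (gen_schur r k)"
  proof (rule iterated_affine_lower_bound)
    show "m \<le> r"
      using assms(5) by simp
    fix t assume "t < r"
    have "2 \<le> k i" if "i < t" for i
      using assms(2)[of i] that \<open>t < r\<close> by simp
    with \<open>t < r\<close> show "int (k t) * int (gen_schur t k) - 1 \<le> int (gen_schur (Suc t) k)"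
      using assms(2,3) by (intro gen_schur_Suc_lower_bound) auto
    show "0 \<le> int (k t)"
      by simp
  qed
  then show ?thesis
    by (simp only: intervals)
qed

end
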